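(* Let $X$ be a set, $m\ge 1$, and let $\phi_1,\phi_2:X\times X\to\mathbb{C}$ be two functions such that, for $\phi=\phi_1$ and for $\phi=\phi_2$: (i) $\phi(x,y)=-\phi(y,x)$ for all $x,y\in X$; (ii) $\phi(x_1,x_2)\phi(x_3,x_4)-\phi(x_1,x_3)\phi(x_2,x_4)+\phi(x_1,x_4)\phi(x_2,x_3)=0$ for all $x_1,x_2,x_3,x_4\in X$. For $(x_1,\ldots,x_{2m})\in X^{2m}$ with $\phi_2(x_i,x_j)\neq 0$ for all $i\neq j$, define \[ \Delta_{2m}(x_1,\ldots,x_{2m})=\frac{\det_{1\le i\le m,\ m+1\le j\le 2m}\left(\dfrac{\phi_1(x_i,x_j)}{\phi_2(x_i,x_j)}\right)}{\prod_{1\le i<j\le m}\phi_2(x_i,x_j)\ \prod_{m+1\le i<j\le 2m}\phi_2(x_i,x_j)}. \] Then $\Delta_{2m}$ is a symmetric function of all its $2m$ arguments $x_1,\ldots,x_{2m}$ (on this domain).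
   Context: The determinant is of the $m\times m$ matrix with rows indexed by $i=1,\ldots,m$ and columns by $j=m+1,\ldots,2m$. *)

theory Defs
  imports "Jordan_Normal_Form.Determinant" "HOL-Combinatorics.Permutations" Complex_Main
begin

text \<open>Arguments x_1,...,x_{2m} are encoded as a function x :: nat => 'a, using indices 1..2m.
The determinant is of the m x m matrix whose (i,j) entry (1-based i in 1..m, j in m+1..2m)
is phi1(x_i,x_j)/phi2(x_i,x_j); in the 0-based Jordan_Normal_Form matrix, entry (i,j)
corresponds to rows i+1 and columns m+j+1.\<close>

definition Delta :: "('a \<Rightarrow> 'a \<Rightarrow> complex) \<Rightarrow> ('a \<Rightarrow> 'a \<Rightarrow> complex) \<Rightarrow> nat \<Rightarrow> (nat \<Rightarrow> 'a) \<Rightarrow> complex" where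
  "Delta phi1 phi2 m x =
     det (mat m m (\<lambda>(i,j). phi1 (x (i+1)) (x (m+j+1)) / phi2 (x (i+1)) (x (m+j+1))))
     / ((\<Prod>i\<in>{1..m}. \<Prod>j\<in>{i<..m}. phi2 (x i) (x j))
        * (\<Prod>i\<in>{m+1..2*m}. \<Prod>j\<in>{i<..2*m}. phi2 (x i) (x j)))"

definition antisym_fun :: "('a \<Rightarrow> 'a \<Rightarrow> complex) \<Rightarrow> bool" where
  "antisym_fun phi \<longleftrightarrow> (\<forall>x y. phi x y = - phi y x)"

definition pluecker_fun :: "('a \<Rightarrow> 'a \<Rightarrow> complex) \<Rightarrow> bool" where
  "pluecker_fun phi \<longleftrightarrow> (\<forall>x1 x2 x3 x4.
     phi x1 x2 * phi x3 x4 - phi x1 x3 * phi x2 x4 + phi x1 x4 * phi x2 x3 = 0)"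

end

theory Submission
  imports Defs
begin

(* Symmetry of Delta_{2m} via a quotient of two alternants.

   A function satisfying the three-term Pluecker relation is a 2x2 minor,
   phi u v = A u * B v - A v * B u.  Writing phi2 = [A,B],
   phi1 = [C,D] and a_k = A x_k, b_k = B x_k, p_k = D x_k, q_k = - C x_k, one has the
   Cauchy-type identity
     Delta_{2m}(x) = +- det N / det H,
   where H is the homogeneous Vandermonde matrix of the pairs (a_k,b_k), k = 1..2m, and N is the
   2m x 2m alternant whose k-th row is (p_k * h_k, q_k * h_k), h_k = (a_k^(m-1-l) b_k^l)_{l<m}.
   Both N and H are built row by row from the points x_k, so permuting the points multiplies
   both determinants by the same sign and the quotient is symmetric. *)


section \<open>General facts about determinants\<close>

lemma det_scale_rows:
  assumes A: "A \<in> carrier_mat n n"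
  shows "det (mat n n (\<lambda>(i,j). c i * A $$ (i,j))) = prod c {0..<n} * det A"
proof -
  have "det (mat n n (\<lambda>(i,j). c i * A $$ (i,j))) =
    (\<Sum>p\<in>{p. p permutes {0..<n}}. signof p * (prod c {0..<n} * (\<Prod>i=0..<n. A $$ (i, p i))))"
    by (subst det_def'[of _ n])
      (auto intro!: sum.cong simp: prod.distrib permutes_in_image[of _ "{0..<n}", simplified])
  also have "\<dots> = prod c {0..<n} * det A"
    by (subst det_def'[OF A]) (simp add: sum_distrib_left algebra_simps)
  finally show ?thesis .
qed

lemma det_scale_cols:
  assumes A: "A \<in> carrier_mat n n"
  shows "det (mat n n (\<lambda>(i,j). A $$ (i,j) * c j)) = prod c {0..<n} * det A"
proof -
  have "det (mat n n (\<lambda>(i,j). A $$ (i,j) * c j)) = det (transpose_mat (mat n n (\<lambda>(i,j). A $$ (i,j) * c j)))"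
    by (rule det_transpose[symmetric]) auto
  also have "transpose_mat (mat n n (\<lambda>(i,j). A $$ (i,j) * c j)) = mat n n (\<lambda>(i,j). c i * transpose_mat A $$ (i,j))"
    using A by (intro eq_matI) auto
  also have "det \<dots> = prod c {0..<n} * det (transpose_mat A)"
    by (rule det_scale_rows) (use A in auto)
  also have "det (transpose_mat A) = det A" by (rule det_transpose[OF A])
  finally show ?thesis .
qed

lemma det_zero_row:
  assumes A: "A \<in> carrier_mat n n" and k: "k < n" and zero: "\<forall>j<n. A $$ (k,j) = 0"
  shows "det A = 0"
proof -
  let ?c = "\<lambda>i. if i = k then 0 else (1::'a::comm_ring_1)"
  have "A = mat n n (\<lambda>(i,j). ?c i * A $$ (i,j))"
    using A zero by (intro eq_matI) auto
  then have "det A = prod ?c {0..<n} * det A" using det_scale_rows[OF A, of ?c] by metis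
  also have "prod ?c {0..<n} = 0" using k by (intro prod_zero) auto
  finally show ?thesis by simp
qed

lemma det_diagonal:
  assumes A: "A \<in> carrier_mat n n" and diag: "\<forall>i<n. \<forall>j<n. i \<noteq> j \<longrightarrow> A $$ (i,j) = 0"
  shows "det A = (\<Prod>i<n. A $$ (i,i))"
proof -
  have "det A = prod_list (diag_mat A)"
    by (rule det_upper_triangular[OF _ A]) (use A diag in \<open>auto simp: upper_triangular_def\<close>)
  also have "\<dots> = (\<Prod>i<n. A $$ (i,i))"
    using A by (subst prod_list_diag_prod) (auto simp: atLeast0LessThan)
  finally show ?thesis .
qed

lemma prod_lessThan_add:
  "(\<Prod>i<(m::nat)+n. f i) = (\<Prod>i<m. f i) * (\<Prod>i<n. f (m+i) :: 'a::comm_monoid_mult)"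
  by (induct n) (auto simp: ac_simps)

lemma sum_lessThan_add:
  "(\<Sum>i<(m::nat)+n. f i) = (\<Sum>i<m. f i) + (\<Sum>i<n. f (m+i) :: 'a::comm_monoid_add)"
  by (induct n) (auto simp: ac_simps)

lemma prod_pairs_shift:
  fixes f :: "nat \<Rightarrow> nat \<Rightarrow> 'a::comm_monoid_mult" and s m :: nat
  shows "(\<Prod>i\<in>{s+1..s+m}. \<Prod>j\<in>{i<..s+m}. f i j) = (\<Prod>i<m. \<Prod>j\<in>{i<..<m}. f (s+1+i) (s+1+j))"
proof -
  have "(\<Prod>i\<in>{s+1..s+m}. \<Prod>j\<in>{i<..s+m}. f i j) = (\<Prod>i<m. \<Prod>j\<in>{s+1+i<..s+m}. f (s+1+i) j)"
    by (rule prod.reindex_bij_witness[of _ "\<lambda>j. s+1+j" "\<lambda>j. j - (s+1)"]) auto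
  also have "\<dots> = (\<Prod>i<m. \<Prod>j\<in>{i<..<m}. f (s+1+i) (s+1+j))"
    by (intro prod.cong refl prod.reindex_bij_witness[of _ "\<lambda>j. s+1+j" "\<lambda>j. j - (s+1)"]) auto
  finally show ?thesis .
qed

lemma permutes_shift_down:
  assumes sig: "\<sigma> permutes {1..n}"
  obtains \<pi> where "\<pi> permutes {0..<n}" and "\<And>k. \<sigma> (Suc k) = Suc (\<pi> k)"
proof -
  define \<pi> where "\<pi> k = (if k < n then \<sigma> (Suc k) - 1 else k)" for k
  have img: "\<sigma> (Suc k) \<in> {1..n}" if "k < n" for k
    using permutes_in_image[OF sig] that by auto
  have shift: "\<sigma> (Suc k) = Suc (\<pi> k)" for k
    using img[of k] permutes_not_in[OF sig, of "Suc k"] unfolding \<pi>_def by fastforce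
  have inj: "inj_on \<pi> {0..<n}"
  proof (rule inj_onI)
    fix i j assume "i \<in> {0..<n}" "j \<in> {0..<n}" "\<pi> i = \<pi> j"
    then have "\<sigma> (Suc i) = \<sigma> (Suc j)" using shift by auto
    then show "i = j" using injD[OF permutes_inj[OF sig]] by auto
  qed
  have sub: "\<pi> ` {0..<n} \<subseteq> {0..<n}" using img unfolding \<pi>_def by fastforce
  have "\<pi> ` {0..<n} = {0..<n}" by (rule endo_inj_surj[OF _ sub inj]) simp
  then have "bij_betw \<pi> {0..<n} {0..<n}" using inj by (simp add: bij_betw_def)
  then have "\<pi> permutes {0..<n}" by (rule bij_imp_permutes) (auto simp: \<pi>_def)
  then show ?thesis using that shift by blast
qed


lemma permutes_points:
  assumes sig: "\<sigma> permutes {1..n}" and R: "\<forall>i\<in>{1..n}. \<forall>j\<in>{1..n}. i \<noteq> j \<longrightarrow> R (x i) (x j)"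
  shows "\<forall>i\<in>{1..n}. \<forall>j\<in>{1..n}. i \<noteq> j \<longrightarrow> R ((x \<circ> \<sigma>) i) ((x \<circ> \<sigma>) j)"
    and "\<forall>k\<in>{1..n}. (x \<circ> \<sigma>) k \<in> x ` {1..n}"
proof -
  have in_range: "\<sigma> k \<in> {1..n}" if "k \<in> {1..n}" for k
    using permutes_in_image[OF sig] that by auto
  then show "\<forall>i\<in>{1..n}. \<forall>j\<in>{1..n}. i \<noteq> j \<longrightarrow> R ((x \<circ> \<sigma>) i) ((x \<circ> \<sigma>) j)"
    using R permutes_inj[OF sig] by (metis comp_apply inj_eq)
  show "\<forall>k\<in>{1..n}. (x \<circ> \<sigma>) k \<in> x ` {1..n}" using in_range by auto
qed


section \<open>The homogeneous Vandermonde determinant\<close>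

definition wedge :: "(nat \<Rightarrow> 'a::field) \<Rightarrow> (nat \<Rightarrow> 'a) \<Rightarrow> nat \<Rightarrow> nat \<Rightarrow> 'a" where
  "wedge a b i j = a i * b j - a j * b i"

definition hvdm :: "nat \<Rightarrow> (nat \<Rightarrow> 'a::field) \<Rightarrow> (nat \<Rightarrow> 'a) \<Rightarrow> 'a" where
  "hvdm n a b = (\<Prod>i<n. \<Prod>j\<in>{i<..<n}. wedge a b i j)"

definition hvdm_mat :: "nat \<Rightarrow> (nat \<Rightarrow> 'a::field) \<Rightarrow> (nat \<Rightarrow> 'a) \<Rightarrow> 'a mat" where
  "hvdm_mat n a b = mat n n (\<lambda>(k,l). a k ^ (n - 1 - l) * b k ^ l)"

lemma hvdm_Suc:
  "hvdm (Suc n) a b = (\<Prod>j\<in>{0<..<Suc n}. wedge a b 0 j) * hvdm n (a \<circ> Suc) (b \<circ> Suc)"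
proof -
  have "hvdm (Suc n) a b = (\<Prod>j\<in>{0<..<Suc n}. wedge a b 0 j) *
     (\<Prod>i<n. \<Prod>j\<in>{Suc i<..<Suc n}. wedge a b (Suc i) j)"
    unfolding hvdm_def by (subst prod.lessThan_Suc_shift) simp
  also have "(\<Prod>i<n. \<Prod>j\<in>{Suc i<..<Suc n}. wedge a b (Suc i) j) = hvdm n (a \<circ> Suc) (b \<circ> Suc)"
    unfolding hvdm_def
  proof (rule prod.cong[OF refl])
    fix i assume "i \<in> {..<n}"
    have "{Suc i<..<Suc n} = Suc ` {i<..<n}"
      by (auto simp: image_iff) (metis Suc_lessE Suc_less_SucD greaterThanLessThan_iff less_trans_Suc)
    then show "(\<Prod>j\<in>{Suc i<..<Suc n}. wedge a b (Suc i) j) =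
         (\<Prod>j\<in>{i<..<n}. wedge (a \<circ> Suc) (b \<circ> Suc) i j)"
      by (simp add: prod.reindex wedge_def)
  qed
  finally show ?thesis .
qed

lemma hvdm_split:
  "hvdm (m+m) a b =
     hvdm m a b * hvdm m (\<lambda>k. a (m+k)) (\<lambda>k. b (m+k)) * (\<Prod>k<m. \<Prod>r<m. wedge a b k (m+r))"
proof -
  have "hvdm (m+m) a b = (\<Prod>i<m. \<Prod>j\<in>{i<..<m+m}. wedge a b i j) *
      (\<Prod>i<m. \<Prod>j\<in>{m+i<..<m+m}. wedge a b (m+i) j)"
    unfolding hvdm_def by (rule prod_lessThan_add)
  also have "(\<Prod>i<m. \<Prod>j\<in>{i<..<m+m}. wedge a b i j) =
      (\<Prod>i<m. (\<Prod>j\<in>{i<..<m}. wedge a b i j) * (\<Prod>r<m. wedge a b i (m+r)))"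
  proof (rule prod.cong[OF refl])
    fix i assume i: "i \<in> {..<m}"
    have "{i<..<m+m} = {i<..<m} \<union> {m..<m+m}" using i by auto
    then have "(\<Prod>j\<in>{i<..<m+m}. wedge a b i j) =
       (\<Prod>j\<in>{i<..<m}. wedge a b i j) * (\<Prod>j\<in>{m..<m+m}. wedge a b i j)"
      by (simp add: prod.union_disjoint ivl_disj_int)
    also have "(\<Prod>j\<in>{m..<m+m}. wedge a b i j) = (\<Prod>r<m. wedge a b i (m+r))"
      by (rule prod.reindex_bij_witness[of _ "\<lambda>r. m+r" "\<lambda>j. j - m"]) auto
    finally show "(\<Prod>j\<in>{i<..<m+m}. wedge a b i j) =
      (\<Prod>j\<in>{i<..<m}. wedge a b i j) * (\<Prod>r<m. wedge a b i (m+r))" .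
  qed
  also have "(\<Prod>i<m. \<Prod>j\<in>{m+i<..<m+m}. wedge a b (m+i) j) = hvdm m (\<lambda>k. a (m+k)) (\<lambda>k. b (m+k))"
    unfolding hvdm_def
  proof (rule prod.cong[OF refl])
    fix i assume "i \<in> {..<m}"
    show "(\<Prod>j\<in>{m+i<..<m+m}. wedge a b (m+i) j) =
        (\<Prod>j\<in>{i<..<m}. wedge (\<lambda>k. a (m+k)) (\<lambda>k. b (m+k)) i j)"
      by (rule prod.reindex_bij_witness[of _ "\<lambda>r. m+r" "\<lambda>j. j - m"]) (auto simp: wedge_def)
  qed
  finally show ?thesis unfolding hvdm_def by (simp add: prod.distrib)
qed

lemma sum_two_delta:
  fixes F :: "nat \<Rightarrow> 'a::comm_ring_1"
  assumes "s < N"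
  shows "(\<Sum>r<N. F r * (if r = s then X else if Suc r = s then Y else 0)) =
         F s * X + (if s > 0 then F (s - 1) * Y else 0)"
proof -
  have "(\<Sum>r<N. F r * (if r = s then X else if Suc r = s then Y else 0)) =
        (\<Sum>r<N. (if r = s then F r * X else 0)) + (\<Sum>r<N. (if r = s - 1 \<and> s > 0 then F r * Y else 0))"
    by (subst sum.distrib[symmetric]) (rule sum.cong, auto)
  also have "\<dots> = F s * X + (if s > 0 then F (s - 1) * Y else 0)"
    using assms by (auto simp: sum.delta')
  finally show ?thesis .
qed

text \<open>The upper bidiagonal matrix with diagonal (1, a 0, ..., a 0) and superdiagonal - b 0;
  multiplying by it replaces column l by a 0 * column l - b 0 * column (l - 1).\<close>
definition hvdm_elim :: "nat \<Rightarrow> (nat \<Rightarrow> 'a::field) \<Rightarrow> (nat \<Rightarrow> 'a) \<Rightarrow> 'a mat" where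
  "hvdm_elim n a b = mat (Suc n) (Suc n) (\<lambda>(r,s).
     if r = s then (if s = 0 then 1 else a 0) else if Suc r = s then - b 0 else 0)"

lemma det_hvdm_elim: "det (hvdm_elim n a b) = a 0 ^ n"
proof -
  have Ec: "hvdm_elim n a b \<in> carrier_mat (Suc n) (Suc n)" by (simp add: hvdm_elim_def)
  have "det (hvdm_elim n a b) = prod_list (diag_mat (hvdm_elim n a b))"
    by (rule det_upper_triangular[OF _ Ec]) (auto simp: hvdm_elim_def upper_triangular_def)
  also have "\<dots> = (\<Prod>i<Suc n. if i = 0 then 1 else a 0)"
    using Ec by (subst prod_list_diag_prod) (auto simp: hvdm_elim_def atLeast0LessThan intro!: prod.cong)
  also have "\<dots> = a 0 ^ n" by (subst prod.lessThan_Suc_shift) simp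
  finally show ?thesis .
qed

lemma hvdm_mat_column_elim:
  "hvdm_mat (Suc n) a b * hvdm_elim n a b =
    four_block_mat (mat 1 1 (\<lambda>_. a 0 ^ n)) (0\<^sub>m 1 n) (mat n 1 (\<lambda>(k,_). a (Suc k) ^ n))
      (mat n n (\<lambda>(k,l). wedge a b 0 (Suc k) * hvdm_mat n (a \<circ> Suc) (b \<circ> Suc) $$ (k,l)))"
    (is "_ = ?F")
proof (rule eq_matI)
  fix i j assume "i < dim_row ?F" and "j < dim_col ?F"
  then have i: "i < Suc n" and j: "j < Suc n" by auto
  have "(hvdm_mat (Suc n) a b * hvdm_elim n a b) $$ (i,j) =
      (\<Sum>r<Suc n. hvdm_mat (Suc n) a b $$ (i,r) * hvdm_elim n a b $$ (r,j))"
    using i j by (simp add: scalar_prod_def atLeast0LessThan times_mat_def hvdm_mat_def hvdm_elim_def)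
  also have "\<dots> = (\<Sum>r<Suc n. (a i ^ (n - r) * b i ^ r) *
      (if r = j then (if j = 0 then 1 else a 0) else if Suc r = j then - b 0 else 0))"
    using i j by (intro sum.cong) (auto simp: hvdm_mat_def hvdm_elim_def)
  also have "\<dots> = (a i ^ (n - j) * b i ^ j) * (if j = 0 then 1 else a 0) +
      (if j > 0 then (a i ^ (n - (j - 1)) * b i ^ (j - 1)) * (- b 0) else 0)"
    by (rule sum_two_delta[OF j])
  also have "\<dots> = ?F $$ (i,j)"
  proof (cases j)
    case 0
    then show ?thesis using i by (cases i) (auto simp: hvdm_mat_def wedge_def)
  next
    case (Suc j0)
    have ex: "n - j0 = Suc (n - Suc j0)" using j Suc by simp
    show ?thesis
      using Suc i j ex by (cases i) (simp_all add: hvdm_mat_def wedge_def algebra_simps)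
  qed
  finally show "(hvdm_mat (Suc n) a b * hvdm_elim n a b) $$ (i,j) = ?F $$ (i,j)" .
qed (auto simp: hvdm_mat_def hvdm_elim_def)

lemma det_hvdm_mat:
  assumes "\<forall>k<n. a k \<noteq> 0"
  shows "det (hvdm_mat n a b) = hvdm n a b"
  using assms
proof (induction n arbitrary: a b)
  case 0
  then show ?case by (simp add: hvdm_def hvdm_mat_def)
next
  case (Suc n)
  have H: "hvdm_mat (Suc n) a b \<in> carrier_mat (Suc n) (Suc n)"
    and Ec: "hvdm_elim n a b \<in> carrier_mat (Suc n) (Suc n)"
    unfolding hvdm_mat_def hvdm_elim_def by auto
  have IH: "det (hvdm_mat n (a \<circ> Suc) (b \<circ> Suc)) = hvdm n (a \<circ> Suc) (b \<circ> Suc)"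
    using Suc.prems by (intro Suc.IH) auto
  have minors: "(\<Prod>k\<in>{0..<n}. wedge a b 0 (Suc k)) = (\<Prod>j\<in>{0<..<Suc n}. wedge a b 0 j)"
    by (rule prod.reindex_bij_witness[of _ "\<lambda>j. j - 1" Suc]) auto
  have "det (hvdm_mat (Suc n) a b) * a 0 ^ n = det (hvdm_mat (Suc n) a b * hvdm_elim n a b)"
    using det_mult[OF H Ec] det_hvdm_elim[of n a b] by simp
  also have "\<dots> = a 0 ^ n * det (mat n n (\<lambda>(k,l). wedge a b 0 (Suc k) * hvdm_mat n (a \<circ> Suc) (b \<circ> Suc) $$ (k,l)))"
    unfolding hvdm_mat_column_elim
    by (subst det_four_block_mat_upper_right_zero[of _ 1 _ n]) (auto simp: det_single)
  also have "\<dots> = a 0 ^ n * ((\<Prod>k\<in>{0..<n}. wedge a b 0 (Suc k)) * det (hvdm_mat n (a \<circ> Suc) (b \<circ> Suc)))"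
    using det_scale_rows[of "hvdm_mat n (a \<circ> Suc) (b \<circ> Suc)" n "\<lambda>k. wedge a b 0 (Suc k)"]
    by (simp add: hvdm_mat_def)
  also have "\<dots> = a 0 ^ n * hvdm (Suc n) a b"
    unfolding IH minors hvdm_Suc ..
  finally show ?case using Suc.prems by simp
qed


section \<open>Products of linear forms in the monomial basis\<close>

text \<open>The polynomial whose homogenisation is the product of the linear forms
  A * be r - al r * B over r in S.\<close>
definition linprod :: "nat set \<Rightarrow> (nat \<Rightarrow> 'a::field) \<Rightarrow> (nat \<Rightarrow> 'a) \<Rightarrow> 'a poly" where
  "linprod S al be = (\<Prod>r\<in>S. [:be r, - al r:])"

lemma degree_linprod: "finite S \<Longrightarrow> degree (linprod S al be) \<le> card S"
proof -
  assume S: "finite S"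
  have "degree (linprod S al be) \<le> sum (degree \<circ> (\<lambda>r. [:be r, - al r:])) S"
    unfolding linprod_def by (rule degree_prod_sum_le[OF S])
  also have "\<dots> \<le> sum (\<lambda>_. 1) S"
    by (rule sum_mono) (auto simp: degree_pCons_le)
  finally show ?thesis by simp
qed

lemma linprod_expand:
  assumes S: "finite S" and A: "A \<noteq> 0"
  shows "(\<Prod>r\<in>S. A * be r - al r * B) =
    (\<Sum>l\<le>card S. coeff (linprod S al be) l * (A ^ (card S - l) * B ^ l))"
proof -
  let ?Q = "linprod S al be"
  let ?t = "B / A"
  have "(\<Prod>r\<in>S. A * be r - al r * B) = (\<Prod>r\<in>S. A * (be r - al r * ?t))"
    using A by (intro prod.cong) (auto simp: field_simps)
  also have "\<dots> = A ^ card S * poly ?Q ?t"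
    unfolding linprod_def poly_prod by (simp add: prod.distrib ac_simps)
  also have "poly ?Q ?t = (\<Sum>l\<le>card S. coeff ?Q l * ?t ^ l)"
  proof -
    have "poly ?Q ?t = (\<Sum>l\<le>degree ?Q. coeff ?Q l * ?t ^ l)" by (rule poly_altdef)
    also have "\<dots> = (\<Sum>l\<le>card S. coeff ?Q l * ?t ^ l)"
      using degree_linprod[OF S, of al be]
      by (intro sum.mono_neutral_left) (auto simp: coeff_eq_0)
    finally show ?thesis .
  qed
  also have "A ^ card S * (\<Sum>l\<le>card S. coeff ?Q l * ?t ^ l) =
      (\<Sum>l\<le>card S. coeff ?Q l * (A ^ (card S - l) * B ^ l))"
    unfolding sum_distrib_left
  proof (intro sum.cong refl)
    fix l assume "l \<in> {..card S}"
    then have "A ^ card S = A ^ (card S - l) * A ^ l" by (simp add: power_add[symmetric])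
    then show "A ^ card S * (coeff ?Q l * ?t ^ l) = coeff ?Q l * (A ^ (card S - l) * B ^ l)"
      using A by (simp add: power_divide field_simps)
  qed
  finally show ?thesis .
qed

lemma prod_offdiag:
  fixes g :: "nat \<Rightarrow> nat \<Rightarrow> 'a::comm_ring_1"
  assumes anti: "\<And>i j. g j i = - g i j"
  shows "(\<Prod>j<n. \<Prod>r\<in>{..<n}-{j}. g j r) =
         (-1) ^ card {(i,j). i < j \<and> j < (n::nat)} * (\<Prod>i<n. \<Prod>j\<in>{i<..<n}. g i j)^2"
proof -
  let ?U = "{(i,j). i < j \<and> j < (n::nat)}"
  let ?L = "{(j,r). r < j \<and> j < (n::nat)}"
  have fU: "finite ?U" by (rule finite_subset[of _ "{..<n} \<times> {..<n}"]) auto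
  have fL: "finite ?L" by (rule finite_subset[of _ "{..<n} \<times> {..<n}"]) auto
  have "(\<Prod>j<n. \<Prod>r\<in>{..<n}-{j}. g j r) = prod (\<lambda>(j,r). g j r) (SIGMA j:{..<n}. {..<n}-{j})"
    by (rule prod.Sigma) auto
  also have "(SIGMA j:{..<n}. {..<n}-{j}) = ?U \<union> ?L" by auto
  also have "prod (\<lambda>(j,r). g j r) (?U \<union> ?L) = prod (\<lambda>(j,r). g j r) ?U * prod (\<lambda>(j,r). g j r) ?L"
    by (rule prod.union_disjoint[OF fU fL]) auto
  also have "prod (\<lambda>(j,r). g j r) ?L = prod (\<lambda>(i,j). g j i) ?U"
    by (rule prod.reindex_bij_witness[of _ prod.swap prod.swap]) (auto simp: prod.swap_def)
  also have "\<dots> = prod (\<lambda>x. (-1) * (case x of (i,j) \<Rightarrow> g i j)) ?U"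
    by (intro prod.cong refl) (clarsimp, subst anti, simp)
  also have "\<dots> = (-1) ^ card ?U * prod (\<lambda>(i,j). g i j) ?U"
    by (simp only: prod.distrib prod_constant)
  also have "prod (\<lambda>(i,j). g i j) ?U = (\<Prod>i<n. \<Prod>j\<in>{i<..<n}. g i j)"
  proof -
    have "(\<Prod>i<n. \<Prod>j\<in>{i<..<n}. g i j) = prod (\<lambda>(i,j). g i j) (SIGMA i:{..<n}. {i<..<n})"
      by (rule prod.Sigma) auto
    also have "(SIGMA i:{..<n}. {i<..<n}) = ?U" by auto
    finally show ?thesis by simp
  qed
  finally show ?thesis by (simp add: power2_eq_square ac_simps)
qed


section \<open>Lagrange-type products attached to the second half of the points\<close>

definition lagr :: "nat \<Rightarrow> (nat \<Rightarrow> 'a::field) \<Rightarrow> (nat \<Rightarrow> 'a) \<Rightarrow> nat \<Rightarrow> nat \<Rightarrow> 'a" where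
  "lagr m a b j k = (\<Prod>r\<in>{..<m}-{j}. wedge a b k (m+r))"

definition lagr_coeffs :: "nat \<Rightarrow> (nat \<Rightarrow> 'a::field) \<Rightarrow> (nat \<Rightarrow> 'a) \<Rightarrow> 'a mat" where
  "lagr_coeffs m a b =
     mat m m (\<lambda>(l,j). coeff (linprod ({..<m}-{j}) (\<lambda>r. a (m+r)) (\<lambda>r. b (m+r))) l)"

lemma lagr_expand:
  assumes "m \<ge> 1" and "a k \<noteq> 0" and "j < m"
  shows "(\<Sum>l<m. (a k ^ (m-1-l) * b k ^ l) * lagr_coeffs m a b $$ (l,j)) = lagr m a b j k"
proof -
  let ?S = "{..<m}-{j}"
  let ?c = "\<lambda>l. coeff (linprod ?S (\<lambda>r. a (m+r)) (\<lambda>r. b (m+r))) l"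
  have card: "card ?S = m - 1" using assms(3) by auto
  have "lagr m a b j k = (\<Prod>r\<in>?S. a k * b (m+r) - a (m+r) * b k)"
    unfolding lagr_def wedge_def ..
  also have "\<dots> = (\<Sum>l\<le>card ?S. ?c l * (a k ^ (card ?S - l) * b k ^ l))"
    by (rule linprod_expand) (use assms in auto)
  also have "{..card ?S} = {..<m}" using card assms(1) by auto
  also have "(\<Sum>l<m. ?c l * (a k ^ (card ?S - l) * b k ^ l)) =
             (\<Sum>l<m. (a k ^ (m-1-l) * b k ^ l) * lagr_coeffs m a b $$ (l,j))"
    using card assms(3) by (intro sum.cong refl) (auto simp: lagr_coeffs_def)
  finally show ?thesis by simp
qed

lemma lagr_vanishes:
  assumes "j < m" "r < m" "r \<noteq> j"
  shows "lagr m a b j (m+r) = 0"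
  unfolding lagr_def by (rule prod_zero) (use assms in \<open>auto simp: wedge_def intro!: bexI[of _ r]\<close>)

lemma lagr_complete:
  assumes "j < m"
  shows "(\<Prod>r<m. wedge a b k (m+r)) = wedge a b k (m+j) * lagr m a b j k"
  unfolding lagr_def using assms by (subst prod.remove[of _ j]) auto

lemma lagr_diagonal_prod:
  "(\<Prod>j<m. lagr m a b j (m+j)) =
    (-1) ^ card {(i,j). i < j \<and> j < m} * hvdm m (\<lambda>k. a (m+k)) (\<lambda>k. b (m+k)) ^ 2"
proof -
  have "(\<Prod>j<m. lagr m a b j (m+j)) = (\<Prod>j<m. \<Prod>r\<in>{..<m}-{j}. wedge (\<lambda>k. a (m+k)) (\<lambda>k. b (m+k)) j r)"
    unfolding lagr_def wedge_def ..
  also have "\<dots> = (-1) ^ card {(i,j). i < j \<and> j < m} * hvdm m (\<lambda>k. a (m+k)) (\<lambda>k. b (m+k)) ^ 2"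
    unfolding hvdm_def by (rule prod_offdiag) (simp add: wedge_def)
  finally show ?thesis .
qed

text \<open>The coefficient matrix inverts the Vandermonde matrix of the second half up to the
  diagonal matrix of the values lagr j (m+j); hence its determinant.\<close>
lemma det_lagr_coeffs:
  assumes m1: "m \<ge> 1" and anz: "\<forall>k<m. a (m+k) \<noteq> 0"
    and vnz: "hvdm m (\<lambda>k. a (m+k)) (\<lambda>k. b (m+k)) \<noteq> 0"
  shows "det (lagr_coeffs m a b) =
    (-1) ^ card {(i,j). i < j \<and> j < m} * hvdm m (\<lambda>k. a (m+k)) (\<lambda>k. b (m+k))"
proof -
  let ?V = "hvdm m (\<lambda>k. a (m+k)) (\<lambda>k. b (m+k))"
  let ?H = "hvdm_mat m (\<lambda>k. a (m+k)) (\<lambda>k. b (m+k))"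
  let ?C = "lagr_coeffs m a b"
  have Hc: "?H \<in> carrier_mat m m" and Cc: "?C \<in> carrier_mat m m"
    by (simp_all add: hvdm_mat_def lagr_coeffs_def)
  have "?H * ?C = mat m m (\<lambda>(r,j). lagr m a b j (m+r))"
  proof (rule eq_matI)
    fix r j assume "r < dim_row (mat m m (\<lambda>(r,j). lagr m a b j (m+r)))"
      "j < dim_col (mat m m (\<lambda>(r,j). lagr m a b j (m+r)))"
    then have r: "r < m" and j: "j < m" by auto
    have "(?H * ?C) $$ (r,j) = (\<Sum>l<m. (a (m+r) ^ (m-1-l) * b (m+r) ^ l) * ?C $$ (l,j))"
      using r j by (simp add: hvdm_mat_def lagr_coeffs_def times_mat_def scalar_prod_def atLeast0LessThan)
    also have "\<dots> = lagr m a b j (m+r)" by (rule lagr_expand) (use m1 anz r j in auto)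
    finally show "(?H * ?C) $$ (r,j) = mat m m (\<lambda>(r,j). lagr m a b j (m+r)) $$ (r,j)" using r j by simp
  qed (auto simp: hvdm_mat_def lagr_coeffs_def)
  then have "det ?H * det ?C = det (mat m m (\<lambda>(r,j). lagr m a b j (m+r)))"
    using det_mult[OF Hc Cc] by simp
  also have "\<dots> = (\<Prod>j<m. lagr m a b j (m+j))"
    by (subst det_diagonal[of _ m]) (auto simp: lagr_vanishes)
  also have "\<dots> = (-1) ^ card {(i,j). i < j \<and> j < m} * ?V ^ 2"
    by (rule lagr_diagonal_prod)
  finally show ?thesis
    using det_hvdm_mat[of m "\<lambda>k. a (m+k)"] anz vnz by (simp add: power2_eq_square)
qed


section \<open>The alternant and the matrix of the quotients\<close>

definition alternant :: "nat \<Rightarrow> (nat \<Rightarrow> 'a::field) \<Rightarrow> (nat \<Rightarrow> 'a) \<Rightarrow> (nat \<Rightarrow> 'a)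
    \<Rightarrow> (nat \<Rightarrow> 'a) \<Rightarrow> 'a mat" where
  "alternant m a b p q = mat (2*m) (2*m) (\<lambda>(k,l).
     if l < m then p k * (a k ^ (m-1-l) * b k ^ l) else q k * (a k ^ (m-1-(l-m)) * b k ^ (l-m)))"

definition quot_mat :: "nat \<Rightarrow> (nat \<Rightarrow> 'a::field) \<Rightarrow> (nat \<Rightarrow> 'a) \<Rightarrow> (nat \<Rightarrow> 'a)
    \<Rightarrow> (nat \<Rightarrow> 'a) \<Rightarrow> 'a mat" where
  "quot_mat m a b p q = mat m m (\<lambda>(i,j). wedge p q i (m+j) / wedge a b i (m+j))"

text \<open>The elimination matrix, built from the coefficient matrix of the Lagrange-type products;
  right multiplication makes the alternant block upper triangular.\<close>
definition elim_mat :: "nat \<Rightarrow> (nat \<Rightarrow> 'a::field) \<Rightarrow> (nat \<Rightarrow> 'a) \<Rightarrow> (nat \<Rightarrow> 'a)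
    \<Rightarrow> (nat \<Rightarrow> 'a) \<Rightarrow> 'a mat" where
  "elim_mat m a b p q = mat (2*m) (2*m) (\<lambda>(r,s).
     if r < m then (if s < m then lagr_coeffs m a b $$ (r,s) * q (m+s) else 0)
     else (if s < m then - (lagr_coeffs m a b $$ (r-m,s) * p (m+s)) else lagr_coeffs m a b $$ (r-m,s-m)))"

text \<open>The elimination matrix is block lower triangular with diagonal blocks the coefficient
  matrix, once with its columns scaled by the q (m + s).\<close>
lemma det_elim_mat:
  "det (elim_mat m a b p q) = (\<Prod>s<m. q (m+s)) * det (lagr_coeffs m a b) * det (lagr_coeffs m a b)"
proof -
  let ?C = "lagr_coeffs m a b"
  have Cc: "?C \<in> carrier_mat m m" by (simp add: lagr_coeffs_def)
  have "elim_mat m a b p q =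
      four_block_mat (mat m m (\<lambda>(r,s). ?C $$ (r,s) * q (m+s))) (0\<^sub>m m m)
        (mat m m (\<lambda>(r,s). - (?C $$ (r,s) * p (m+s)))) ?C"
    by (rule eq_matI) (auto simp: elim_mat_def lagr_coeffs_def mult_2)
  then have "det (elim_mat m a b p q) = det (mat m m (\<lambda>(r,s). ?C $$ (r,s) * q (m+s))) * det ?C"
    by (simp add: det_four_block_mat_upper_right_zero[of _ m _ m] Cc)
  then show ?thesis
    using det_scale_cols[OF Cc, of "\<lambda>s. q (m+s)"] by (simp add: atLeast0LessThan)
qed

text \<open>The product of the alternant with the elimination matrix: by lagr_expand each column
  becomes a Lagrange-type product, and in the rows of the second half only the diagonal of the
  lower right block survives.\<close>
lemma alternant_times_elim_mat:
  assumes m1: "m \<ge> 1" and anz: "\<forall>k<2*m. a k \<noteq> 0"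
  shows "alternant m a b p q * elim_mat m a b p q =
    four_block_mat (mat m m (\<lambda>(k,s). wedge p q k (m+s) * lagr m a b s k))
                   (mat m m (\<lambda>(k,s). q k * lagr m a b s k))
                   (0\<^sub>m m m)
                   (mat m m (\<lambda>(r,s). q (m+r) * lagr m a b s (m+r)))"
    (is "?N * ?T = ?B")
proof (rule eq_matI)
  fix k s assume "k < dim_row ?B" and "s < dim_col ?B"
  then have k: "k < 2*m" and s: "s < 2*m" by auto
  let ?h = "\<lambda>j. (\<Sum>l<m. (a k ^ (m-1-l) * b k ^ l) * lagr_coeffs m a b $$ (l,j))"
  have h: "?h j = lagr m a b j k" if "j < m" for j
    by (rule lagr_expand) (use m1 anz k that in auto)
  have "(?N * ?T) $$ (k,s) = (\<Sum>r<m+m. ?N $$ (k,r) * ?T $$ (r,s))"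
    using k s by (simp add: scalar_prod_def atLeast0LessThan times_mat_def alternant_def elim_mat_def mult_2)
  also have "\<dots> = (\<Sum>r<m. ?N $$ (k,r) * ?T $$ (r,s)) + (\<Sum>r<m. ?N $$ (k,m+r) * ?T $$ (m+r,s))"
    by (rule sum_lessThan_add)
  also have "\<dots> = (if s < m then wedge p q k (m+s) * lagr m a b s k else q k * lagr m a b (s-m) k)"
  proof (cases "s < m")
    case True
    have "(\<Sum>r<m. ?N $$ (k,r) * ?T $$ (r,s)) = p k * q (m+s) * ?h s"
      using k s True by (simp add: sum_distrib_left alternant_def elim_mat_def ac_simps)
    moreover have "(\<Sum>r<m. ?N $$ (k,m+r) * ?T $$ (m+r,s)) = - (q k * p (m+s) * ?h s)"
      using k s True by (simp add: sum_distrib_left alternant_def elim_mat_def ac_simps sum_negf[symmetric])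
    ultimately show ?thesis using h[OF True] True by (simp add: wedge_def algebra_simps)
  next
    case False
    then obtain s0 where s0: "s = m + s0" "s0 < m" using s by (metis add_diff_inverse_nat mult_2 nat_add_left_cancel_less)
    have "(\<Sum>r<m. ?N $$ (k,r) * ?T $$ (r,s)) = 0"
      using k s False by (simp add: elim_mat_def)
    moreover have "(\<Sum>r<m. ?N $$ (k,m+r) * ?T $$ (m+r,s)) = q k * ?h s0"
      using k s s0 by (simp add: sum_distrib_left alternant_def elim_mat_def ac_simps)
    ultimately show ?thesis using h[OF s0(2)] s0 by simp
  qed
  also have "\<dots> = ?B $$ (k,s)"
  proof -
    have "wedge p q k (m+s) * lagr m a b s k = 0" if km: "k \<ge> m" and sm: "s < m"
    proof -
      obtain k0 where k0: "k = m + k0" "k0 < m"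
        using k km by (metis add_diff_inverse_nat mult_2 nat_add_left_cancel_less not_less)
      show ?thesis
        using k0 sm lagr_vanishes[of s m k0 a b] by (cases "k0 = s") (simp_all add: wedge_def)
    qed
    then show ?thesis using k s by (auto simp: mult_2)
  qed
  finally show "(?N * ?T) $$ (k,s) = ?B $$ (k,s)" .
qed (auto simp: alternant_def elim_mat_def mult_2)

lemma quot_mat_scaled:
  assumes "\<forall>i<m. \<forall>j<m. wedge a b i (m+j) \<noteq> 0"
  shows "mat m m (\<lambda>(k,s). wedge p q k (m+s) * lagr m a b s k) =
    mat m m (\<lambda>(i,j). (\<Prod>r<m. wedge a b i (m+r)) * quot_mat m a b p q $$ (i,j))"
proof (rule eq_matI)
  fix i j assume "i < dim_row (mat m m (\<lambda>(i,j). (\<Prod>r<m. wedge a b i (m+r)) * quot_mat m a b p q $$ (i,j)))"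
    "j < dim_col (mat m m (\<lambda>(i,j). (\<Prod>r<m. wedge a b i (m+r)) * quot_mat m a b p q $$ (i,j)))"
  then have i: "i < m" and j: "j < m" by auto
  have "wedge a b i (m+j) \<noteq> 0" using assms i j by auto
  then show "mat m m (\<lambda>(k,s). wedge p q k (m+s) * lagr m a b s k) $$ (i,j) =
      mat m m (\<lambda>(i,j). (\<Prod>r<m. wedge a b i (m+r)) * quot_mat m a b p q $$ (i,j)) $$ (i,j)"
    using i j lagr_complete[OF j, of a b i] by (simp add: quot_mat_def)
qed auto

lemma det_quot_mat_nondegenerate:
  fixes a b p q :: "nat \<Rightarrow> 'a::field"
  assumes m1: "m \<ge> 1"
    and wnz: "\<forall>i<2*m. \<forall>j<2*m. i \<noteq> j \<longrightarrow> wedge a b i j \<noteq> 0"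
    and anz: "\<forall>k<2*m. a k \<noteq> 0"
    and qnz: "\<forall>j<m. q (m+j) \<noteq> 0"
  shows "det (quot_mat m a b p q) * (\<Prod>k<m. \<Prod>r<m. wedge a b k (m+r)) =
         (-1) ^ card {(i,j). i < j \<and> j < m} * det (alternant m a b p q)"
proof -
  let ?c = "card {(i,j). i < j \<and> j < m}"
  let ?V = "hvdm m (\<lambda>k. a (m+k)) (\<lambda>k. b (m+k))"
  let ?C = "lagr_coeffs m a b"
  define G where "G k = (\<Prod>r<m. wedge a b k (m+r))" for k
  have Nc: "alternant m a b p q \<in> carrier_mat (2*m) (2*m)" by (simp add: alternant_def)
  have Tc: "elim_mat m a b p q \<in> carrier_mat (2*m) (2*m)" by (simp add: elim_mat_def)
  have Vnz: "?V \<noteq> 0"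
    unfolding hvdm_def using wnz by (auto simp: wedge_def mult_2)
  have Qnz: "(\<Prod>s<m. q (m+s)) \<noteq> 0" using qnz by auto
  have sign_sq: "(-1::'a) ^ ?c * (-1) ^ ?c = 1" by (simp add: power_add[symmetric])
  have upper_left: "mat m m (\<lambda>(k,s). wedge p q k (m+s) * lagr m a b s k) =
      mat m m (\<lambda>(i,j). G i * quot_mat m a b p q $$ (i,j))"
    unfolding G_def by (rule quot_mat_scaled) (use wnz in auto)
  have "det (alternant m a b p q) * det (elim_mat m a b p q) =
      det (mat m m (\<lambda>(i,j). G i * quot_mat m a b p q $$ (i,j))) *
      det (mat m m (\<lambda>(r,s). q (m+r) * lagr m a b s (m+r)))"
    unfolding det_mult[OF Nc Tc, symmetric] alternant_times_elim_mat[OF m1 anz] upper_left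
    by (rule det_four_block_mat_lower_left_zero) auto
  also have "\<dots> = (\<Prod>k<m. G k) * det (quot_mat m a b p q) * (\<Prod>s<m. q (m+s)) * (\<Prod>j<m. lagr m a b j (m+j))"
    by (subst det_scale_rows[of _ m], simp add: quot_mat_def, subst det_diagonal[of _ m])
      (auto simp: lagr_vanishes atLeast0LessThan prod.distrib)
  also have "(\<Prod>j<m. lagr m a b j (m+j)) = (-1) ^ ?c * (det ?C * det ?C)"
    using lagr_diagonal_prod[of m a b] det_lagr_coeffs[OF m1 _ Vnz] anz sign_sq
    by (simp add: power2_eq_square mult_2 algebra_simps)
  finally have "det (alternant m a b p q) * (\<Prod>s<m. q (m+s)) * (det ?C * det ?C) =
      ((-1) ^ ?c * (\<Prod>k<m. G k) * det (quot_mat m a b p q)) * (\<Prod>s<m. q (m+s)) * (det ?C * det ?C)"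
    unfolding det_elim_mat by (simp add: ac_simps)
  moreover have "det ?C \<noteq> 0" using det_lagr_coeffs[OF m1 _ Vnz] anz Vnz by (simp add: mult_2)
  ultimately have "det (alternant m a b p q) = (-1) ^ ?c * (\<Prod>k<m. G k) * det (quot_mat m a b p q)"
    using Qnz by simp
  then have "(-1) ^ ?c * det (alternant m a b p q) =
      ((-1) ^ ?c * (-1) ^ ?c) * ((\<Prod>k<m. G k) * det (quot_mat m a b p q))"
    by (simp add: ac_simps)
  then show ?thesis unfolding G_def sign_sq by (simp add: ac_simps)
qed

text \<open>The identity in general: if q (m + j) = 0 then also p (m + j) = 0, and both sides vanish
  (a zero column of the quotient matrix, a zero row of the alternant).\<close>
lemma det_quot_mat:
  assumes m1: "m \<ge> 1"
    and wnz: "\<forall>i<2*m. \<forall>j<2*m. i \<noteq> j \<longrightarrow> wedge a b i j \<noteq> 0"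
    and anz: "\<forall>k<2*m. a k \<noteq> 0"
    and qnz: "\<forall>j<m. q (m+j) = 0 \<longrightarrow> p (m+j) = 0"
  shows "det (quot_mat m a b p q) * (\<Prod>k<m. \<Prod>r<m. wedge a b k (m+r)) =
         (-1) ^ card {(i,j). i < j \<and> j < m} * det (alternant m a b p q)"
proof (cases "\<exists>j<m. q (m+j) = 0")
  case True
  then obtain j0 where j0: "j0 < m" "q (m+j0) = 0" "p (m+j0) = 0" using qnz by auto
  have "det (quot_mat m a b p q) = det (transpose_mat (quot_mat m a b p q))"
    by (rule det_transpose[symmetric]) (auto simp: quot_mat_def)
  also have "\<dots> = 0"
    by (rule det_zero_row[of _ m j0]) (use j0 in \<open>auto simp: quot_mat_def wedge_def\<close>)
  finally have "det (quot_mat m a b p q) = 0" .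
  moreover have "det (alternant m a b p q) = 0"
    by (rule det_zero_row[of _ "2*m" "m+j0"]) (use j0 in \<open>auto simp: alternant_def\<close>)
  ultimately show ?thesis by simp
next
  case False
  then show ?thesis by (intro det_quot_mat_nondegenerate[OF m1 wnz anz]) auto
qed

text \<open>Both the alternant and the Vandermonde matrix are defined row by row, so relabelling
  the points leaves their quotient unchanged.\<close>
lemma alternant_quotient_permute:
  fixes a b p q :: "nat \<Rightarrow> 'a::field"
  assumes pi: "\<pi> permutes {0..<2*m}"
  shows "det (alternant m (a \<circ> \<pi>) (b \<circ> \<pi>) (p \<circ> \<pi>) (q \<circ> \<pi>)) / det (hvdm_mat (2*m) (a \<circ> \<pi>) (b \<circ> \<pi>)) =
         det (alternant m a b p q) / det (hvdm_mat (2*m) a b)"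
proof -
  have lt: "\<pi> k < 2*m" if "k < 2*m" for k using permutes_in_image[OF pi] that by auto
  have "alternant m (a \<circ> \<pi>) (b \<circ> \<pi>) (p \<circ> \<pi>) (q \<circ> \<pi>) =
      mat (2*m) (2*m) (\<lambda>(i,j). alternant m a b p q $$ (\<pi> i, j))"
    by (rule eq_matI) (auto simp: alternant_def lt)
  then have N: "det (alternant m (a \<circ> \<pi>) (b \<circ> \<pi>) (p \<circ> \<pi>) (q \<circ> \<pi>)) = signof \<pi> * det (alternant m a b p q)"
    using det_permute_rows[OF _ pi, of "alternant m a b p q"] by (simp add: alternant_def)
  have "hvdm_mat (2*m) (a \<circ> \<pi>) (b \<circ> \<pi>) = mat (2*m) (2*m) (\<lambda>(i,j). hvdm_mat (2*m) a b $$ (\<pi> i, j))"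
    by (rule eq_matI) (auto simp: hvdm_mat_def lt)
  then have H: "det (hvdm_mat (2*m) (a \<circ> \<pi>) (b \<circ> \<pi>)) = signof \<pi> * det (hvdm_mat (2*m) a b)"
    using det_permute_rows[OF _ pi, of "hvdm_mat (2*m) a b"] by (simp add: hvdm_mat_def)
  have "(signof \<pi> :: 'a) \<noteq> 0" by (simp add: sign_def)
  then show ?thesis unfolding N H by simp
qed


section \<open>Pluecker functions are 2x2 minors\<close>

text \<open>If phi u v \<noteq> 0, the Pluecker relation for (u, v, x, y) expresses phi x y as the minor
  of A = phi u _ / phi u v and B = phi v _.\<close>
lemma pluecker_rep:
  assumes "pluecker_fun phi"
  shows "\<exists>A B. \<forall>x y. phi x y = A x * B y - A y * B x"
proof (cases "\<exists>u v. phi u v \<noteq> 0")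
  case True
  then obtain u v where uv: "phi u v \<noteq> 0" by auto
  have "phi x y = phi u x / phi u v * phi v y - phi u y / phi u v * phi v x" for x y
  proof -
    have "phi u v * phi x y - phi u x * phi v y + phi u y * phi v x = 0"
      using assms unfolding pluecker_fun_def by blast
    then show ?thesis using uv by (simp add: field_simps)
  qed
  then show ?thesis by (intro exI[of _ "\<lambda>x. phi u x / phi u v"] exI[of _ "\<lambda>y. phi v y"]) blast
next
  case False
  then show ?thesis by (rule_tac x="\<lambda>_. 0" in exI) auto
qed

text \<open>A generic shear avoids finitely many points: u + l * v vanishes only where u and v do.\<close>
lemma generic_shear:
  fixes u v :: "'b \<Rightarrow> 'a::field_char_0"
  assumes "finite K"
  shows "\<exists>l. \<forall>k\<in>K. u k + l * v k = 0 \<longrightarrow> u k = 0 \<and> v k = 0"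
proof -
  have "finite ((\<lambda>k. - u k / v k) ` K)" using assms by simp
  then obtain l where l: "l \<notin> (\<lambda>k. - u k / v k) ` K"
    using ex_new_if_finite[OF infinite_UNIV_char_0] by blast
  have "u k = 0 \<and> v k = 0" if k: "k \<in> K" and eq: "u k + l * v k = 0" for k
  proof (cases "v k = 0")
    case True then show ?thesis using eq by simp
  next
    case False
    then have "l = - u k / v k" using eq by (simp add: field_simps eq_neg_iff_add_eq_0)
    then show ?thesis using l k by auto
  qed
  then show ?thesis by blast
qed

text \<open>Normalised representation: on a given finite set of points, the first coordinate
  vanishes only where both do (replace A by A + l * B for a generic l).\<close>
lemma pluecker_rep_normalised:
  assumes "pluecker_fun phi" "finite W"
  shows "\<exists>A B. (\<forall>x y. phi x y = A x * B y - A y * B x) \<and> (\<forall>w\<in>W. A w = 0 \<longrightarrow> B w = 0)"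
proof -
  obtain A0 B where rep: "\<forall>x y. phi x y = A0 x * B y - A0 y * B x"
    using pluecker_rep[OF assms(1)] by blast
  obtain l where l: "\<forall>w\<in>W. A0 w + l * B w = 0 \<longrightarrow> A0 w = 0 \<and> B w = 0"
    using generic_shear[OF assms(2)] by blast
  have "\<forall>x y. phi x y = (A0 x + l * B x) * B y - (A0 y + l * B y) * B x"
    using rep by (simp add: algebra_simps)
  then show ?thesis using l by (intro exI[of _ "\<lambda>x. A0 x + l * B x"] exI[of _ B] conjI) blast+
qed


section \<open>Delta as a quotient of alternants\<close>

text \<open>The Cauchy-type formula for Delta in terms of coordinates of the points z 1, ..., z 2m
  (shifted to indices 0, ..., 2m - 1): the numerator is det_quot_mat, the denominator
  together with the mixed minors is the Vandermonde determinant of all 2m points.\<close>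
lemma Delta_alternant_quotient:
  fixes z :: "nat \<Rightarrow> 'a" and phi1 phi2 :: "'a \<Rightarrow> 'a \<Rightarrow> complex"
  assumes m1: "m \<ge> 1"
   and r1: "\<forall>u v. phi1 u v = C u * D v - C v * D u"
   and r2: "\<forall>u v. phi2 u v = A u * B v - A v * B u"
   and nz: "\<forall>i\<in>{1..2*m}. \<forall>j\<in>{1..2*m}. i \<noteq> j \<longrightarrow> phi2 (z i) (z j) \<noteq> 0"
   and norm: "\<forall>k\<in>{1..2*m}. (A (z k) = 0 \<longrightarrow> B (z k) = 0) \<and> (C (z k) = 0 \<longrightarrow> D (z k) = 0)"
  defines "a \<equiv> \<lambda>k. A (z (Suc k))" and "b \<equiv> \<lambda>k. B (z (Suc k))"
    and "p \<equiv> \<lambda>k. D (z (Suc k))" and "q \<equiv> \<lambda>k. - C (z (Suc k))"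
  shows "Delta phi1 phi2 m z =
    (-1) ^ card {(i,j). i < j \<and> j < m} * (det (alternant m a b p q) / det (hvdm_mat (2*m) a b))"
proof -
  have wedge_phi: "wedge a b i j = phi2 (z (Suc i)) (z (Suc j))" for i j
    using r2 by (simp add: wedge_def a_def b_def)
  have wnz: "\<forall>i<2*m. \<forall>j<2*m. i \<noteq> j \<longrightarrow> wedge a b i j \<noteq> 0"
    using nz unfolding wedge_phi by auto
  have anz: "\<forall>k<2*m. a k \<noteq> 0"
  proof (intro allI impI)
    fix k assume k: "k < 2*m"
    define j :: nat where "j = (if k = 0 then 1 else 0)"
    have "j < 2*m" "j \<noteq> k" using m1 k by (auto simp: j_def)
    then have "wedge a b k j \<noteq> 0" using wnz k by auto
    then show "a k \<noteq> 0" using norm k by (auto simp: wedge_def a_def b_def)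
  qed
  have qnz: "\<forall>j<m. q (m+j) = 0 \<longrightarrow> p (m+j) = 0"
    using norm by (auto simp: p_def q_def)
  have entries: "mat m m (\<lambda>(i,j). phi1 (z (i+1)) (z (m+j+1)) / phi2 (z (i+1)) (z (m+j+1))) =
      quot_mat m a b p q"
    by (rule eq_matI) (auto simp: quot_mat_def wedge_def r1 r2 a_def b_def p_def q_def algebra_simps)
  have first_half: "(\<Prod>i\<in>{1..m}. \<Prod>j\<in>{i<..m}. phi2 (z i) (z j)) = hvdm m a b"
    using prod_pairs_shift[where s=0 and m=m and f="\<lambda>i j. phi2 (z i) (z j)"] by (simp add: hvdm_def wedge_phi)
  have wedge_phi2: "wedge (\<lambda>k. a (m+k)) (\<lambda>k. b (m+k)) i j = phi2 (z (Suc (m+i))) (z (Suc (m+j)))" for i j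
    using wedge_phi[of "m+i" "m+j"] by (simp add: wedge_def)
  have second_half: "(\<Prod>i\<in>{m+1..2*m}. \<Prod>j\<in>{i<..2*m}. phi2 (z i) (z j)) =
      hvdm m (\<lambda>k. a (m+k)) (\<lambda>k. b (m+k))"
    using prod_pairs_shift[where s=m and m=m and f="\<lambda>i j. phi2 (z i) (z j)"] by (simp add: hvdm_def wedge_phi2 mult_2)
  have mixed_nz: "(\<Prod>k<m. \<Prod>r<m. wedge a b k (m+r)) \<noteq> 0" using wnz by auto
  have "det (hvdm_mat (2*m) a b) =
      hvdm m a b * hvdm m (\<lambda>k. a (m+k)) (\<lambda>k. b (m+k)) * (\<Prod>k<m. \<Prod>r<m. wedge a b k (m+r))"
    using det_hvdm_mat[OF anz] hvdm_split[of m a b] by (simp add: mult_2)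
  then show ?thesis
    unfolding Delta_def entries first_half second_half
    using det_quot_mat[OF m1 wnz anz qnz, symmetric] mixed_nz by simp
qed


theorem mainTheorem1:
  fixes phi1 phi2 :: "'a \<Rightarrow> 'a \<Rightarrow> complex" and m :: nat and x :: "nat \<Rightarrow> 'a"
    and \<sigma> :: "nat \<Rightarrow> nat"
  assumes "m \<ge> 1"
    and "antisym_fun phi1" and "pluecker_fun phi1"
    and "antisym_fun phi2" and "pluecker_fun phi2"
    and "\<forall>i\<in>{1..2*m}. \<forall>j\<in>{1..2*m}. i \<noteq> j \<longrightarrow> phi2 (x i) (x j) \<noteq> 0"
    and "\<sigma> permutes {1..2*m}"
  shows "Delta phi1 phi2 m (x \<circ> \<sigma>) = Delta phi1 phi2 m x"
proof -
  let ?W = "x ` {1..2*m}"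
  have W: "finite ?W" by simp
  obtain A B where r2: "\<forall>u v. phi2 u v = A u * B v - A v * B u"
    and normAB: "\<forall>w\<in>?W. A w = 0 \<longrightarrow> B w = 0"
    using pluecker_rep_normalised[OF assms(5) W] by blast
  obtain C D where r1: "\<forall>u v. phi1 u v = C u * D v - C v * D u"
    and normCD: "\<forall>w\<in>?W. C w = 0 \<longrightarrow> D w = 0"
    using pluecker_rep_normalised[OF assms(3) W] by blast
  have norm: "\<forall>k\<in>{1..2*m}. (A (z k) = 0 \<longrightarrow> B (z k) = 0) \<and> (C (z k) = 0 \<longrightarrow> D (z k) = 0)"
    if "\<forall>k\<in>{1..2*m}. z k \<in> ?W" for z
    using that normAB normCD by blast
  note relabelled = permutes_points[where R="\<lambda>u v. phi2 u v \<noteq> 0", OF assms(7,6)]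
  obtain \<pi> where pi: "\<pi> permutes {0..<2*m}" and shift: "\<And>k. \<sigma> (Suc k) = Suc (\<pi> k)"
    using permutes_shift_down[OF assms(7)] by blast
  have relabel: "(\<lambda>k. F ((x \<circ> \<sigma>) (Suc k))) = (\<lambda>k. F (x (Suc k))) \<circ> \<pi>" for F :: "'a \<Rightarrow> complex"
    by (simp add: comp_def shift)
  have "Delta phi1 phi2 m (x \<circ> \<sigma>) = (-1) ^ card {(i,j). i < j \<and> j < m} *
      (det (alternant m ((\<lambda>k. A (x (Suc k))) \<circ> \<pi>) ((\<lambda>k. B (x (Suc k))) \<circ> \<pi>)
                         ((\<lambda>k. D (x (Suc k))) \<circ> \<pi>) ((\<lambda>k. - C (x (Suc k))) \<circ> \<pi>)) /
       det (hvdm_mat (2*m) ((\<lambda>k. A (x (Suc k))) \<circ> \<pi>) ((\<lambda>k. B (x (Suc k))) \<circ> \<pi>)))"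
    unfolding relabel[of A, symmetric] relabel[of B, symmetric] relabel[of D, symmetric]
      relabel[of "\<lambda>w. - C w", symmetric]
    by (rule Delta_alternant_quotient[OF assms(1) r1 r2 relabelled(1) norm]) (use relabelled(2) in auto)
  also have "\<dots> = Delta phi1 phi2 m x"
    unfolding alternant_quotient_permute[OF pi]
    by (rule Delta_alternant_quotient[OF assms(1) r1 r2 assms(6) norm, symmetric]) auto
  finally show ?thesis .
qed

end
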